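(* Let $x,y\in\{0,1\}^\infty$ be independent sequences, both with randomness rate $\tau>0$; let $0<\sigma<\tau$, $0<\sigma'<\tau-\sigma$, $b=\lceil(1-\sigma)/\sigma'\rceil$, let $a$ be a positive integer, and let $t_0=0$, $t_1=a$, $t_i=b(t_1+\cdots+t_{i-1})$ for $i\ge2$. Let $\bar{x}_i=x(1:t_i)$ and $\bar{y}_i=y(1:t_i)$. Then there is a constant $c$ such that for all $i,j\ge1$: (a) $\big|K(\bar{y}_i\bar{x}_j)-\big(K(\bar{y}_i)+K(\bar{x}_j)\big)\big|\le c(i+j)$; (b) $\big|K(\bar{x}_i\bar{y}_j)-\big(K(\bar{x}_i)+K(\bar{y}_j)\big)\big|\le c(i+j)$.
   Context: $x(n_1:n_2)$ denotes bits $n_1$ through $n_2$ of $x$ (indexed from 1); juxtaposition is concatenation. $K(u)$ is plain Kolmogorov complexity with respect to a fixed universal machine. A sequence has randomness rate $\tau$ if $K(x(1:n))\ge\tau n$ for all but finitely many $n$. Sequences $x,y$ are independent if there is a constant $c_0$ with $K(x(1:n)y(1:m))\ge K(x(1:n))+K(y(1:m))-c_0(1+\log n+\log m)$ for all $n,m\ge1$. *)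

theory Defs
  imports Complex_Main
begin

datatype recf = Zr | Sc | Id nat | Cn recf "recf list" | Pr recf recf | Mn recf

inductive eval :: "recf \<Rightarrow> nat list \<Rightarrow> nat \<Rightarrow> bool" where
  zero: "eval Zr xs 0"
| suc:  "eval Sc (x # xs) (Suc x)"
| proj: "i < length xs \<Longrightarrow> eval (Id i) xs (xs ! i)"
| comp: "list_all2 (\<lambda>g y. eval g xs y) gs ys \<Longrightarrow> eval f ys z \<Longrightarrow> eval (Cn f gs) xs z"
| pr0:  "eval f xs y \<Longrightarrow> eval (Pr f g) (0 # xs) y"
| prS:  "eval (Pr f g) (k # xs) y \<Longrightarrow> eval g (k # y # xs) z \<Longrightarrow> eval (Pr f g) (Suc k # xs) z"
| mn:   "eval f (k # xs) 0 \<Longrightarrow> (\<forall>i<k. \<exists>y. y > 0 \<and> eval f (i # xs) y) \<Longrightarrow> eval (Mn f) xs k"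

text \<open>Bijective encoding of binary strings by natural numbers.\<close>
fun enc :: "bool list \<Rightarrow> nat" where
  "enc [] = 0"
| "enc (b # w) = 2 * enc w + (if b then 2 else 1)"

definition partial_computable :: "(bool list \<Rightarrow> bool list option) \<Rightarrow> bool" where
  "partial_computable V \<longleftrightarrow>
     (\<exists>f. \<forall>p v. eval f [enc p] (enc v) \<longleftrightarrow> V p = Some v)"

definition universal :: "(bool list \<Rightarrow> bool list option) \<Rightarrow> bool" where
  "universal U \<longleftrightarrow> partial_computable U \<and>
     (\<forall>V. partial_computable V \<longrightarrow>
        (\<exists>c. \<forall>p x. V p = Some x \<longrightarrow> (\<exists>q. U q = Some x \<and> length q \<le> length p + c)))"

definition KC :: "(bool list \<Rightarrow> bool list option) \<Rightarrow> bool list \<Rightarrow> nat" where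
  "KC U x = (LEAST n. \<exists>p. length p = n \<and> U p = Some x)"

text \<open>x(1:n) for a sequence indexed from 1 (bit x 0 is ignored).\<close>
definition pre :: "(nat \<Rightarrow> bool) \<Rightarrow> nat \<Rightarrow> bool list" where
  "pre x n = map x [1..<Suc n]"

definition has_rate :: "(bool list \<Rightarrow> bool list option) \<Rightarrow> (nat \<Rightarrow> bool) \<Rightarrow> real \<Rightarrow> bool" where
  "has_rate U x \<tau> \<longleftrightarrow> (\<forall>\<^sub>F n in sequentially. real (KC U (pre x n)) \<ge> \<tau> * real n)"

definition indep :: "(bool list \<Rightarrow> bool list option) \<Rightarrow> (nat \<Rightarrow> bool) \<Rightarrow> (nat \<Rightarrow> bool) \<Rightarrow> bool" where
  "indep U x y \<longleftrightarrow> (\<exists>c0::real. \<forall>n m. n \<ge> 1 \<longrightarrow> m \<ge> 1 \<longrightarrow>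
     real (KC U (pre x n @ pre y m)) \<ge> real (KC U (pre x n)) + real (KC U (pre y m))
        - c0 * (1 + log 2 (real n) + log 2 (real m)))"

end

theory Submission
  imports Defs
begin

text \<open>
  Independence bounds \<open>K(x(1:n) y(1:m))\<close> from below by
  \<open>K(x(1:n)) + K(y(1:m))\<close> up to \<open>O(log n + log m)\<close>. Conversely, a shortest
  description of \<open>x(1:n)\<close>, preceded by a self-delimiting code of its length and
  followed by a shortest description of \<open>y(1:m)\<close>, describes the concatenation at
  an extra cost of \<open>O(log n)\<close>. The same kind of code shows that swapping the two
  blocks of a string changes its complexity by \<open>O(log)\<close> only, so \<open>y\<close> and \<open>x\<close>
  are independent as well. Both decoders are written as partial recursive programs,
  which the optimality of \<open>U\<close> turns into description-length bounds. Finally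
  \<open>t\<^sub>i\<close> grows at most like \<open>((a+1)(b+1))\<^sup>i\<close>, so all logarithmic error
  terms are \<open>O(i + j)\<close>.
\<close>

section \<open>Partial recursive programs\<close>

inductive_cases eval_CnE: "eval (Cn f gs) xs y"
inductive_cases eval_PrE: "eval (Pr f g) (k # xs) y"
inductive_cases eval_MnE: "eval (Mn f) xs y"

lemma list_all2_eval_unique:
  assumes "list_all2 (\<lambda>g y. eval g xs y \<and> (\<forall>z. eval g xs z \<longrightarrow> y = z)) gs ys"
    and "list_all2 (\<lambda>g y. eval g xs y) gs ys'"
  shows "ys = ys'"
  using assms
proof (induction gs arbitrary: ys ys')
  case (Cons g gs)
  then show ?case by (auto simp: list_all2_Cons1)
qed simp

lemma eval_unique: "eval f xs y \<Longrightarrow> eval f xs z \<Longrightarrow> y = z"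
proof (induction arbitrary: z rule: eval.induct)
  case (comp xs gs ys f y)
  from comp.prems obtain ys' where ys': "list_all2 (\<lambda>g y. eval g xs y) gs ys'" "eval f ys' z"
    by (rule eval_CnE) auto
  have "list_all2 (\<lambda>g y. eval g xs y \<and> (\<forall>z. eval g xs z \<longrightarrow> y = z)) gs ys"
    using comp.IH(1) by (rule list_all2_mono) auto
  then have "ys = ys'" using ys'(1) by (rule list_all2_eval_unique)
  then show ?case using comp.IH(2) ys'(2) by simp
next
  case (pr0 f xs y g)
  from pr0.prems have "eval f xs z" by (rule eval_PrE) auto
  then show ?case using pr0.IH by simp
next
  case (prS f g k xs y y')
  from prS.prems obtain w where "eval (Pr f g) (k # xs) w" "eval g (k # w # xs) z"
    by (rule eval_PrE) auto
  then show ?case using prS.IH by simp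
next
  case (mn f k xs)
  from mn.prems have "eval f (z # xs) 0" and below_z: "\<forall>i<z. \<exists>y>0. eval f (i # xs) y"
    by (auto elim: eval_MnE)
  show ?case
  proof (rule linorder_cases)
    assume "k < z"
    then show ?thesis using below_z mn.IH(1) by fastforce
  next
    assume "z < k"
    then show ?thesis using mn.IH(2) \<open>eval f (z # xs) 0\<close> by fastforce
  qed
qed (auto elim: eval.cases)

text \<open>
  The evaluation lemmas take the output as an equation \<open>y = \<dots>\<close>, so that they apply as
  introduction rules whatever syntactic form the expected value has.
\<close>

lemma eval_ZrI: "y = 0 \<Longrightarrow> eval Zr xs y"
  using eval.zero by simp

lemma eval_ScI: "y = Suc x \<Longrightarrow> eval Sc (x # xs) y"
  using eval.suc by simp

lemma eval_IdI: "i < length xs \<Longrightarrow> y = xs ! i \<Longrightarrow> eval (Id i) xs y"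
  using eval.proj by simp

lemma eval_Cn1I: "eval g xs y \<Longrightarrow> eval f [y] z \<Longrightarrow> eval (Cn f [g]) xs z"
  by (rule eval.comp[of _ _ "[y]"]) auto

lemma eval_Cn2I:
  "eval g1 xs y1 \<Longrightarrow> eval g2 xs y2 \<Longrightarrow> eval f [y1, y2] z \<Longrightarrow>
    eval (Cn f [g1, g2]) xs z"
  by (rule eval.comp[of _ _ "[y1, y2]"]) auto

lemma eval_PrI:
  assumes "eval f xs (R 0)" and "\<And>k. eval g (k # R k # xs) (R (Suc k))" and "y = R k"
  shows "eval (Pr f g) (k # xs) y"
  unfolding \<open>y = R k\<close> by (induction k) (auto intro: eval.pr0 eval.prS assms)

lemma eval_MnI:
  assumes "\<And>i. i \<le> k \<Longrightarrow> eval f (i # xs) (T i)"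
    and "T k = 0" and "\<And>i. i < k \<Longrightarrow> 0 < T i" and "y = k"
  shows "eval (Mn f) xs y"
proof -
  have "eval f (k # xs) 0" using assms(1)[of k] assms(2) by simp
  then show ?thesis using assms(1,3,4) by (auto intro!: eval.mn less_imp_le)
qed

definition rec_one :: recf where
  "rec_one = Cn Sc [Zr]"

lemma eval_rec_one: "y = 1 \<Longrightarrow> eval rec_one xs y"
  unfolding rec_one_def by (auto intro!: eval_Cn1I eval_ZrI eval_ScI)

definition rec_pred :: recf where
  "rec_pred = Pr Zr (Id 0)"

lemma eval_rec_pred: "y = x - 1 \<Longrightarrow> eval rec_pred [x] y"
  unfolding rec_pred_def by (rule eval_PrI[where R = "\<lambda>k. k - 1"]) (auto intro!: eval_ZrI eval_IdI)

definition rec_sub :: recf where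
  "rec_sub = Cn (Pr (Id 0) (Cn rec_pred [Id 1])) [Id 1, Id 0]"

lemma eval_rec_sub:
  assumes "z = x - y"
  shows "eval rec_sub [x, y] z"
proof -
  have "eval (Pr (Id 0) (Cn rec_pred [Id 1])) [y, x] (x - y)"
    by (rule eval_PrI[where R = "\<lambda>k. x - k"]) (auto intro!: eval_IdI eval_Cn1I eval_rec_pred)
  then show ?thesis
    unfolding rec_sub_def using assms by (auto intro!: eval_Cn2I eval_IdI)
qed

definition rec_add :: recf where
  "rec_add = Pr (Id 0) (Cn Sc [Id 1])"

lemma eval_rec_add: "z = x + y \<Longrightarrow> eval rec_add [x, y] z"
  unfolding rec_add_def
  by (rule eval_PrI[where R = "\<lambda>k. k + y"]) (auto intro!: eval_IdI eval_Cn1I eval_ScI)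

definition rec_mult :: recf where
  "rec_mult = Pr Zr (Cn rec_add [Id 1, Id 2])"

lemma eval_rec_mult: "z = x * y \<Longrightarrow> eval rec_mult [x, y] z"
  unfolding rec_mult_def
  by (rule eval_PrI[where R = "\<lambda>k. k * y"]) (auto intro!: eval_ZrI eval_IdI eval_Cn2I eval_rec_add)

definition rec_pow2 :: recf where
  "rec_pow2 = Pr rec_one (Cn rec_add [Id 1, Id 1])"

lemma eval_rec_pow2: "y = 2 ^ x \<Longrightarrow> eval rec_pow2 [x] y"
  unfolding rec_pow2_def
  by (rule eval_PrI[where R = "\<lambda>k. 2 ^ k"]) (auto intro!: eval_rec_one eval_IdI eval_Cn2I eval_rec_add)

definition rec_absdiff :: recf where
  "rec_absdiff = Cn rec_add [rec_sub, Cn rec_sub [Id 1, Id 0]]"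

lemma eval_rec_absdiff: "z = (x - y) + (y - x) \<Longrightarrow> eval rec_absdiff [x, y] z"
  unfolding rec_absdiff_def by (auto intro!: eval_Cn2I eval_IdI eval_rec_add eval_rec_sub)

section \<open>Programs on codes of binary strings\<close>

lemma inj_enc: "inj enc"
proof (rule injI)
  fix u v :: "bool list"
  show "enc u = enc v \<Longrightarrow> u = v"
  proof (induction u arbitrary: v)
    case Nil
    then show ?case by (cases v) (auto split: if_splits)
  next
    case (Cons b u)
    then show ?case by (cases v) (auto split: if_splits, presburger+)
  qed
qed

lemma enc_surj: "\<exists>s. enc s = n"
proof (induction n rule: less_induct)
  case (less n)
  show ?case
  proof (cases "n = 0")
    case False
    then obtain s where s: "enc s = (n - 1) div 2" using less by fastforce
    show ?thesis
    proof (cases "even n")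
      case True
      then have "enc (True # s) = n" using s False by simp presburger
      then show ?thesis by blast
    next
      case False
      then have "enc (False # s) = n" using s by simp
      then show ?thesis by blast
    qed
  qed (use enc.simps(1) in blast)
qed

lemma enc_append: "enc (u @ v) = enc u + 2 ^ length u * enc v"
  by (induction u) auto

lemma two_pow_length_le_enc: "2 ^ length s \<le> enc s + 1"
  by (induction s) auto

lemma enc_eq_0_iff: "enc w = 0 \<longleftrightarrow> w = []"
  by (cases w) auto

lemma enc_tl: "enc (tl w) = (enc w - 1) div 2"
  by (cases w) auto

lemma enc_take: "enc (take L w) = enc w - 2 ^ L * enc (drop L w)"
proof (cases "L \<le> length w")
  case True
  have "enc w = enc (take L w) + 2 ^ L * enc (drop L w)"
    using enc_append[of "take L w" "drop L w"] True by simp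
  then show ?thesis by simp
qed simp

text \<open>\<open>(enc w - 1) div 2\<close> is the least \<open>m\<close> with \<open>enc w \<le> 2 * m + 2\<close>.\<close>

definition rec_tl :: recf where
  "rec_tl = Mn (Cn rec_sub [Id 1, Cn Sc [Cn Sc [Cn rec_add [Id 0, Id 0]]]])"

lemma eval_rec_tl: "y = enc (tl w) \<Longrightarrow> eval rec_tl [enc w] y"
  unfolding rec_tl_def enc_tl
  by (rule eval_MnI[where T = "\<lambda>m. enc w - Suc (Suc (m + m))"])
    (auto intro!: eval_Cn1I eval_Cn2I eval_IdI eval_ScI eval_rec_add eval_rec_sub)

definition rec_drop :: recf where
  "rec_drop = Pr (Id 0) (Cn rec_tl [Id 1])"

lemma eval_rec_drop: "y = enc (drop L w) \<Longrightarrow> eval rec_drop [L, enc w] y"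
  unfolding rec_drop_def
  by (rule eval_PrI[where R = "\<lambda>k. enc (drop k w)"])
    (auto intro!: eval_IdI eval_Cn1I eval_rec_tl simp: drop_Suc tl_drop)

definition rec_length :: recf where
  "rec_length = Mn rec_drop"

lemma eval_rec_length: "y = length w \<Longrightarrow> eval rec_length [enc w] y"
  unfolding rec_length_def
  by (rule eval_MnI[where T = "\<lambda>i. enc (drop i w)"])
    (auto intro!: eval_rec_drop simp: neq0_conv[symmetric] enc_eq_0_iff)

definition rec_take :: recf where
  "rec_take = Cn rec_sub [Id 1, Cn rec_mult [Cn rec_pow2 [Id 0], rec_drop]]"

lemma eval_rec_take: "y = enc (take L w) \<Longrightarrow> eval rec_take [L, enc w] y"
  unfolding rec_take_def enc_take
  by (auto intro!: eval_Cn1I eval_Cn2I eval_IdI eval_rec_pow2 eval_rec_mult eval_rec_drop eval_rec_sub)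

definition rec_append :: recf where
  "rec_append = Cn rec_add [Id 0, Cn rec_mult [Cn rec_pow2 [Cn rec_length [Id 0]], Id 1]]"

lemma eval_rec_append: "y = enc (u @ v) \<Longrightarrow> eval rec_append [enc u, enc v] y"
  unfolding rec_append_def enc_append
  by (auto intro!: eval_Cn1I eval_Cn2I eval_IdI eval_rec_pow2 eval_rec_mult eval_rec_length eval_rec_add)

text \<open>\<open>enc (b # w) - 2 * enc w\<close> is \<open>2\<close> if \<open>b\<close> and \<open>1\<close> otherwise.\<close>

definition rec_hd_bit :: recf where
  "rec_hd_bit = Cn rec_absdiff [Cn rec_sub [Id 0, Cn rec_add [rec_tl, rec_tl]], rec_one]"

lemma eval_rec_hd_bit:
  assumes "y = of_bool b"
  shows "eval rec_hd_bit [enc (b # w)] y"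
proof -
  have tl: "eval rec_tl [enc (b # w)] (enc w)"
    by (rule eval_rec_tl) simp
  have hd: "eval (Id 0) [enc (b # w)] (enc (b # w))"
    by (rule eval_IdI) simp_all
  have digit: "eval (Cn rec_sub [Id 0, Cn rec_add [rec_tl, rec_tl]]) [enc (b # w)] (if b then 2 else 1)"
    by (rule eval_Cn2I[OF hd eval_Cn2I[OF tl tl eval_rec_add[OF refl]]]) (rule eval_rec_sub, simp)
  show ?thesis
    unfolding rec_hd_bit_def
    by (rule eval_Cn2I[OF digit eval_rec_one[OF refl]]) (rule eval_rec_absdiff, use assms in simp)
qed

definition rec_leading_ones :: recf where
  "rec_leading_ones = Mn (Cn rec_hd_bit [rec_drop])"

lemma eval_rec_leading_ones:
  assumes "y = k"
  shows "eval rec_leading_ones [enc (replicate k True @ False # r)] y"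
proof -
  let ?w = "replicate k True @ False # r"
  have drop_w: "drop i ?w = (i < k) # drop (Suc i) ?w" if "i \<le> k" for i
  proof -
    have "?w ! i = (i < k)" using that by (simp add: nth_append)
    then show ?thesis using that Cons_nth_drop_Suc[of i ?w] by simp
  qed
  have "eval (Cn rec_hd_bit [rec_drop]) [i, enc ?w] (of_bool (i < k))" if "i \<le> k" for i
  proof (rule eval_Cn1I[OF eval_rec_drop[OF refl]])
    show "eval rec_hd_bit [enc (drop i ?w)] (of_bool (i < k))"
      unfolding drop_w[OF that] by (rule eval_rec_hd_bit) (rule refl)
  qed
  then show ?thesis
    unfolding rec_leading_ones_def by (rule eval_MnI[where T = "\<lambda>i. of_bool (i < k)"]) (use assms in auto)
qed

section \<open>Self-delimiting codes\<close>

definition delim :: "bool list \<Rightarrow> bool list" where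
  "delim s = replicate (length s) True @ False # s"

lemma delim_append: "delim s @ r = replicate (length s) True @ False # s @ r"
  by (simp add: delim_def)

lemma length_delim: "length (delim s) = 2 * length s + 1"
  by (simp add: delim_def)

definition rec_strip_unary :: recf where
  "rec_strip_unary = Cn rec_drop [Cn Sc [rec_leading_ones], Id 0]"

lemma eval_rec_strip_unary: "y = enc (s @ r) \<Longrightarrow> eval rec_strip_unary [enc (delim s @ r)] y"
  unfolding rec_strip_unary_def delim_append
  by (auto intro!: eval_Cn1I eval_Cn2I eval_ScI eval_rec_leading_ones eval_IdI eval_rec_drop)

definition rec_delim_prefix :: recf where
  "rec_delim_prefix = Cn rec_take [rec_leading_ones, rec_strip_unary]"

definition rec_delim_suffix :: recf where
  "rec_delim_suffix = Cn rec_drop [rec_leading_ones, rec_strip_unary]"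

lemma eval_rec_delim_prefix: "y = enc s \<Longrightarrow> eval rec_delim_prefix [enc (delim s @ r)] y"
  unfolding rec_delim_prefix_def
  by (rule eval_Cn2I[OF _ eval_rec_strip_unary[OF refl]])
    (auto simp: delim_append intro!: eval_rec_leading_ones eval_rec_take)

lemma eval_rec_delim_suffix: "y = enc r \<Longrightarrow> eval rec_delim_suffix [enc (delim s @ r)] y"
  unfolding rec_delim_suffix_def
  by (rule eval_Cn2I[OF _ eval_rec_strip_unary[OF refl]])
    (auto simp: delim_append intro!: eval_rec_leading_ones eval_rec_drop)

definition rec_run_split :: "recf \<Rightarrow> recf" where
  "rec_run_split f = Cn rec_append
     [Cn f [Cn rec_take [rec_delim_prefix, rec_delim_suffix]],
      Cn f [Cn rec_drop [rec_delim_prefix, rec_delim_suffix]]]"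

lemma eval_rec_run_split:
  assumes "enc s = length p" and "eval f [enc p] (enc u)" and "eval f [enc q] (enc v)"
  shows "eval (rec_run_split f) [enc (delim s @ p @ q)] (enc (u @ v))"
proof -
  note decode = eval_Cn2I[OF eval_rec_delim_prefix[OF refl] eval_rec_delim_suffix[OF refl]]
  have p: "eval (Cn rec_take [rec_delim_prefix, rec_delim_suffix]) [enc (delim s @ p @ q)] (enc p)"
    by (rule decode) (rule eval_rec_take, simp add: assms(1))
  have q: "eval (Cn rec_drop [rec_delim_prefix, rec_delim_suffix]) [enc (delim s @ p @ q)] (enc q)"
    by (rule decode) (rule eval_rec_drop, simp add: assms(1))
  show ?thesis
    unfolding rec_run_split_def
    by (rule eval_Cn2I[OF eval_Cn1I[OF p assms(2)] eval_Cn1I[OF q assms(3)] eval_rec_append[OF refl]])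
qed

definition rec_run_rotate :: "recf \<Rightarrow> recf" where
  "rec_run_rotate f = Cn rec_append
     [Cn rec_drop [rec_delim_prefix, Cn f [rec_delim_suffix]],
      Cn rec_take [rec_delim_prefix, Cn f [rec_delim_suffix]]]"

lemma eval_rec_run_rotate:
  assumes "enc s = length v" and "eval f [enc r] (enc (v @ u))"
  shows "eval (rec_run_rotate f) [enc (delim s @ r)] (enc (u @ v))"
proof -
  note decode = eval_Cn2I[OF eval_rec_delim_prefix[OF refl] eval_Cn1I[OF eval_rec_delim_suffix[OF refl] assms(2)]]
  have u: "eval (Cn rec_drop [rec_delim_prefix, Cn f [rec_delim_suffix]]) [enc (delim s @ r)] (enc u)"
    by (rule decode) (rule eval_rec_drop, simp add: assms(1))
  have v: "eval (Cn rec_take [rec_delim_prefix, Cn f [rec_delim_suffix]]) [enc (delim s @ r)] (enc v)"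
    by (rule decode) (rule eval_rec_take, simp add: assms(1))
  show ?thesis
    unfolding rec_run_rotate_def by (rule eval_Cn2I[OF u v eval_rec_append[OF refl]])
qed

section \<open>Complexity of concatenations\<close>

lemma universal_simulates_recf:
  assumes "universal U"
  shows "\<exists>c. \<forall>w v. eval F [enc w] (enc v) \<longrightarrow>
    (\<exists>q. U q = Some v \<and> length q \<le> length w + c)"
proof -
  have unique: "v = v'" if "eval F [enc w] (enc v)" and "eval F [enc w] (enc v')" for w v v'
    using eval_unique[OF that] inj_enc by (simp add: inj_eq)
  have the_output: "(THE v. eval F [enc w] (enc v)) = v" if "eval F [enc w] (enc v)" for w v
    using that by (rule the_equality) (rule unique[OF _ that])
  define V where
    "V w = (if \<exists>v. eval F [enc w] (enc v) then Some (THE v. eval F [enc w] (enc v)) else None)" for w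
  have V: "V w = Some v \<longleftrightarrow> eval F [enc w] (enc v)" for w v
  proof
    assume "V w = Some v"
    then obtain v' where "eval F [enc w] (enc v')" and "v = (THE v. eval F [enc w] (enc v))"
      unfolding V_def by (auto split: if_splits)
    then show "eval F [enc w] (enc v)"
      using the_output by simp
  qed (auto simp: V_def the_output)
  then have "partial_computable V"
    unfolding partial_computable_def by blast
  then obtain c where
    "\<forall>w v. V w = Some v \<longrightarrow> (\<exists>q. U q = Some v \<and> length q \<le> length w + c)"
    using assms unfolding universal_def by blast
  then show ?thesis
    unfolding V by blast
qed

lemma universal_recf:
  assumes "universal U"
  obtains f where "\<And>p v. eval f [enc p] (enc v) \<longleftrightarrow> U p = Some v"
  using assms unfolding universal_def partial_computable_def by blast

lemma KC_le: "U q = Some x \<Longrightarrow> KC U x \<le> length q"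
  unfolding KC_def by (rule Least_le) blast

lemma KC_le_recf:
  assumes "universal U"
  shows "\<exists>c. \<forall>w v. eval F [enc w] (enc v) \<longrightarrow> KC U v \<le> length w + c"
  using universal_simulates_recf[OF assms, of F] KC_le by (meson le_trans)

lemma universal_describes:
  assumes "universal U"
  shows "\<exists>c. \<forall>w. \<exists>q. U q = Some w \<and> length q \<le> length w + c"
proof -
  have "eval (Id 0) [enc w] (enc w)" for w
    by (rule eval_IdI) simp_all
  then show ?thesis
    using universal_simulates_recf[OF assms, of "Id 0"] by blast
qed

lemma KC_witness:
  assumes "universal U"
  obtains p where "U p = Some w" and "length p = KC U w"
proof -
  \<comment> \<open>Without a description of \<open>w\<close>, \<open>KC U w\<close> would be \<open>LEAST\<close> of an empty set.\<close>
  have "\<exists>n p. length p = n \<and> U p = Some w"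
    using universal_describes[OF assms] by blast
  then have "\<exists>p. length p = KC U w \<and> U p = Some w"
    unfolding KC_def by (rule LeastI_ex)
  then show ?thesis using that by blast
qed

lemma KC_le_length:
  assumes "universal U"
  shows "\<exists>c. \<forall>w. KC U w \<le> length w + c"
  using universal_describes[OF assms] KC_le by (meson le_trans)

lemma length_le_log_enc: "real (length s) \<le> log 2 (real (enc s) + 1)"
  using le_log2_of_power[OF two_pow_length_le_enc[of s]] by (simp add: add.commute)

lemma KC_append_le:
  assumes "universal U"
  shows "\<exists>c. \<forall>u v.
    real (KC U (u @ v)) \<le> real (KC U u) + real (KC U v) + 2 * log 2 (real (KC U u) + 1) + c"
proof -
  obtain f where f: "\<And>p v. eval f [enc p] (enc v) \<longleftrightarrow> U p = Some v"
    using universal_recf[OF assms] by blast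
  obtain c where c: "\<forall>w z. eval (rec_run_split f) [enc w] (enc z) \<longrightarrow> KC U z \<le> length w + c"
    using KC_le_recf[OF assms] by blast
  have "real (KC U (u @ v)) \<le> real (KC U u) + real (KC U v) + 2 * log 2 (real (KC U u) + 1) + (c + 1)" for u v
  proof -
    obtain p where p: "U p = Some u" "length p = KC U u" using KC_witness[OF assms] .
    obtain q where q: "U q = Some v" "length q = KC U v" using KC_witness[OF assms] .
    obtain s where s: "enc s = length p" using enc_surj by blast
    have "eval (rec_run_split f) [enc (delim s @ p @ q)] (enc (u @ v))"
      using s p q f by (intro eval_rec_run_split) auto
    then have "KC U (u @ v) \<le> length (delim s @ p @ q) + c"
      using c by blast
    then have "real (KC U (u @ v)) \<le> 2 * real (length s) + 1 + real (KC U u) + real (KC U v) + c"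
      using p q by (simp add: length_delim)
    moreover have "real (length s) \<le> log 2 (real (KC U u) + 1)"
      using length_le_log_enc[of s] s p by simp
    ultimately show ?thesis by simp
  qed
  then show ?thesis by blast
qed

lemma KC_append_commute_le:
  assumes "universal U"
  shows "\<exists>c. \<forall>u v. real (KC U (u @ v)) \<le> real (KC U (v @ u)) + 2 * log 2 (real (length v) + 1) + c"
proof -
  obtain f where f: "\<And>p v. eval f [enc p] (enc v) \<longleftrightarrow> U p = Some v"
    using universal_recf[OF assms] by blast
  obtain c where c: "\<forall>w z. eval (rec_run_rotate f) [enc w] (enc z) \<longrightarrow> KC U z \<le> length w + c"
    using KC_le_recf[OF assms] by blast
  have "real (KC U (u @ v)) \<le> real (KC U (v @ u)) + 2 * log 2 (real (length v) + 1) + (c + 1)" for u v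
  proof -
    obtain r where r: "U r = Some (v @ u)" "length r = KC U (v @ u)" using KC_witness[OF assms] .
    obtain s where s: "enc s = length v" using enc_surj by blast
    have "eval (rec_run_rotate f) [enc (delim s @ r)] (enc (u @ v))"
      using s r f by (intro eval_rec_run_rotate) auto
    then have "KC U (u @ v) \<le> length (delim s @ r) + c"
      using c by blast
    then have "real (KC U (u @ v)) \<le> 2 * real (length s) + 1 + real (KC U (v @ u)) + c"
      using r by (simp add: length_delim)
    moreover have "real (length s) \<le> log 2 (real (length v) + 1)"
      using length_le_log_enc[of s] s by simp
    ultimately show ?thesis by simp
  qed
  then show ?thesis by blast
qed

lemma log2_add_le:
  fixes a b :: real
  assumes "0 \<le> a" and "0 \<le> b"
  shows "log 2 (a + b + 1) \<le> log 2 (a + 1) + log 2 (b + 1)"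
proof -
  have "log 2 (a + b + 1) \<le> log 2 ((a + 1) * (b + 1))"
    using assms by (intro log_mono) (auto simp: algebra_simps)
  also have "\<dots> = log 2 (a + 1) + log 2 (b + 1)"
    using assms by (intro log_mult_pos) auto
  finally show ?thesis .
qed

lemma KC_append_le_length:
  assumes "universal U"
  shows "\<exists>c. \<forall>u v.
    real (KC U (u @ v)) \<le> real (KC U u) + real (KC U v) + 2 * log 2 (real (length u) + 1) + c"
proof -
  obtain c where c: "\<forall>u v.
      real (KC U (u @ v)) \<le> real (KC U u) + real (KC U v) + 2 * log 2 (real (KC U u) + 1) + c"
    using KC_append_le[OF assms] by blast
  obtain d where d: "\<forall>w. KC U w \<le> length w + d"
    using KC_le_length[OF assms] by blast
  have log_KC: "log 2 (real (KC U u) + 1) \<le> log 2 (real (length u) + 1) + log 2 (real d + 1)" for u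
  proof -
    have "log 2 (real (KC U u) + 1) \<le> log 2 (real (length u) + real d + 1)"
      using d by (intro log_mono) (auto simp flip: of_nat_add)
    also have "\<dots> \<le> log 2 (real (length u) + 1) + log 2 (real d + 1)"
      by (rule log2_add_le) auto
    finally show ?thesis .
  qed
  then have "real (KC U (u @ v)) \<le> real (KC U u) + real (KC U v) + 2 * log 2 (real (length u) + 1)
      + (c + 2 * log 2 (real d + 1))" for u v
    using c[rule_format, of u v] log_KC[of u] by linarith
  then show ?thesis by blast
qed

lemma length_pre [simp]: "length (pre x n) = n"
  by (simp add: pre_def)

lemma pre_0 [simp]: "pre x 0 = []"
  by (simp add: pre_def)

lemma log2_of_nat_nonneg: "0 \<le> log 2 (real n)"
  by (cases "n = 0") (auto simp: log_def)

lemma log2_Suc_le: "1 \<le> n \<Longrightarrow> log 2 (real n + 1) \<le> 1 + log 2 (real n)"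
proof -
  assume "1 \<le> n"
  then have "log 2 (real n + 1) \<le> log 2 (2 * real n)"
    by (intro log_mono) auto
  also have "\<dots> = 1 + log 2 (real n)"
    using \<open>1 \<le> n\<close> by (subst log_mult_pos) auto
  finally show ?thesis .
qed

lemma mult_le_abs_mult:
  fixes c X Y :: real
  assumes "0 \<le> X" and "X \<le> Y"
  shows "c * X \<le> \<bar>c\<bar> * Y"
proof -
  have "c * X \<le> \<bar>c\<bar> * X"
    using assms(1) by (rule mult_right_mono[OF abs_ge_self])
  also have "\<dots> \<le> \<bar>c\<bar> * Y"
    using assms(2) by (rule mult_left_mono) simp
  finally show ?thesis .
qed

lemma indep_commute:
  assumes "universal U" and "indep U x y"
  shows "indep U y x"
proof -
  obtain c0 where c0: "\<forall>n m. n \<ge> 1 \<longrightarrow> m \<ge> 1 \<longrightarrow>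
      real (KC U (pre x n @ pre y m)) \<ge> real (KC U (pre x n)) + real (KC U (pre y m))
        - c0 * (1 + log 2 (real n) + log 2 (real m))"
    using assms(2) unfolding indep_def by blast
  obtain c where c: "\<forall>u v. real (KC U (u @ v)) \<le> real (KC U (v @ u)) + 2 * log 2 (real (length v) + 1) + c"
    using KC_append_commute_le[OF assms(1)] by blast
  define c' where "c' = \<bar>c0\<bar> + \<bar>c\<bar> + 2"
  have "real (KC U (pre y n @ pre x m)) \<ge> real (KC U (pre y n)) + real (KC U (pre x m))
      - c' * (1 + log 2 (real n) + log 2 (real m))" if "n \<ge> 1" and "m \<ge> 1" for n m
  proof -
    let ?L = "1 + log 2 (real n) + log 2 (real m)"
    have L: "0 \<le> log 2 (real n)" "0 \<le> log 2 (real m)"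
      by (rule log2_of_nat_nonneg)+
    have "real (KC U (pre x m @ pre y n)) \<le> real (KC U (pre y n @ pre x m)) + 2 * log 2 (real n + 1) + c"
      using c[rule_format, of "pre x m" "pre y n"] by simp
    moreover have "real (KC U (pre x m @ pre y n)) \<ge> real (KC U (pre x m)) + real (KC U (pre y n)) - c0 * ?L"
      using c0 that by (simp add: add.commute add.left_commute)
    moreover have "c0 * ?L \<le> \<bar>c0\<bar> * ?L" and "c \<le> \<bar>c\<bar> * ?L"
      using L mult_le_abs_mult[of 1 ?L c] by (auto intro: mult_le_abs_mult)
    moreover have "log 2 (real n + 1) \<le> 1 + log 2 (real n)"
      using that(1) by (rule log2_Suc_le)
    ultimately show ?thesis
      unfolding c'_def using L by (simp add: algebra_simps)
  qed
  then show ?thesis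
    unfolding indep_def by blast
qed

lemma indep_KC_append_ge:
  assumes "indep U x y"
  shows "\<exists>c\<ge>0. \<forall>n m. real (KC U (pre x n @ pre y m))
    \<ge> real (KC U (pre x n)) + real (KC U (pre y m)) - c * (1 + log 2 (real n + 1) + log 2 (real m + 1))"
proof -
  obtain c0 where c0: "\<forall>n m. n \<ge> 1 \<longrightarrow> m \<ge> 1 \<longrightarrow>
      real (KC U (pre x n @ pre y m)) \<ge> real (KC U (pre x n)) + real (KC U (pre y m))
        - c0 * (1 + log 2 (real n) + log 2 (real m))"
    using assms unfolding indep_def by blast
  define c where "c = \<bar>c0\<bar> + real (KC U [])"
  have "real (KC U (pre x n @ pre y m))
    \<ge> real (KC U (pre x n)) + real (KC U (pre y m)) - c * (1 + log 2 (real n + 1) + log 2 (real m + 1))" for n m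
  proof -
    define L where "L = 1 + log 2 (real n + 1) + log 2 (real m + 1)"
    have "1 \<le> L"
      unfolding L_def by simp
    have "c * L = \<bar>c0\<bar> * L + real (KC U []) * L"
      by (simp add: c_def algebra_simps)
    moreover have "0 \<le> \<bar>c0\<bar> * L" and "real (KC U []) \<le> real (KC U []) * L"
      using \<open>1 \<le> L\<close> mult_le_abs_mult[of 1 L "real (KC U [])"] by simp_all
    moreover have "real (KC U (pre x n)) + real (KC U (pre y m)) - \<bar>c0\<bar> * L - real (KC U [])
        \<le> real (KC U (pre x n @ pre y m))"
    proof (cases "n = 0 \<or> m = 0")
      case True
      then show ?thesis
        using \<open>1 \<le> L\<close> by auto
    next
      case False
      then have "log 2 (real n) \<le> log 2 (real n + 1)" and "log 2 (real m) \<le> log 2 (real m + 1)"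
        by (auto intro: log_mono)
      then have "c0 * (1 + log 2 (real n) + log 2 (real m)) \<le> \<bar>c0\<bar> * L"
        unfolding L_def using log2_of_nat_nonneg[of n] log2_of_nat_nonneg[of m]
        by (intro mult_le_abs_mult) auto
      moreover have "1 \<le> n" and "1 \<le> m"
        using False by auto
      ultimately show ?thesis
        using c0 of_nat_0_le_iff[of "KC U []"] by fastforce
    qed
    ultimately show ?thesis
      unfolding L_def by linarith
  qed
  moreover have "0 \<le> c"
    unfolding c_def by simp
  ultimately show ?thesis
    by blast
qed

lemma indep_KC_append_additive:
  assumes "universal U" and "indep U x y"
  shows "\<exists>C\<ge>0. \<forall>n m.
    \<bar>real (KC U (pre x n @ pre y m)) - (real (KC U (pre x n)) + real (KC U (pre y m)))\<bar>
      \<le> C * (1 + log 2 (real n + 1) + log 2 (real m + 1))"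
proof -
  obtain c where c: "\<forall>u v.
      real (KC U (u @ v)) \<le> real (KC U u) + real (KC U v) + 2 * log 2 (real (length u) + 1) + c"
    using KC_append_le_length[OF assms(1)] by blast
  obtain c' where "0 \<le> c'" and c': "\<forall>n m. real (KC U (pre x n @ pre y m))
      \<ge> real (KC U (pre x n)) + real (KC U (pre y m)) - c' * (1 + log 2 (real n + 1) + log 2 (real m + 1))"
    using indep_KC_append_ge[OF assms(2)] by blast
  define C where "C = c' + \<bar>c\<bar> + 2"
  have "\<bar>real (KC U (pre x n @ pre y m)) - (real (KC U (pre x n)) + real (KC U (pre y m)))\<bar>
    \<le> C * (1 + log 2 (real n + 1) + log 2 (real m + 1))" for n m
  proof -
    define L where "L = 1 + log 2 (real n + 1) + log 2 (real m + 1)"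
    have "0 \<le> log 2 (real m + 1)" and "1 \<le> L"
      unfolding L_def by simp_all
    have "C * L = c' * L + \<bar>c\<bar> * L + 2 * L"
      by (simp add: C_def algebra_simps)
    moreover have "c \<le> \<bar>c\<bar> * L" and "0 \<le> \<bar>c\<bar> * L" and "0 \<le> c' * L"
      using \<open>1 \<le> L\<close> \<open>0 \<le> c'\<close> mult_le_abs_mult[of 1 L c] by simp_all
    moreover have "real (KC U (pre x n @ pre y m)) \<le> real (KC U (pre x n)) + real (KC U (pre y m))
        + 2 * log 2 (real n + 1) + c"
      using c[rule_format, of "pre x n" "pre y m"] by simp
    moreover have "real (KC U (pre x n)) + real (KC U (pre y m)) - c' * L \<le> real (KC U (pre x n @ pre y m))"
      using c' unfolding L_def by blast
    ultimately show ?thesis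
      unfolding abs_le_iff L_def[symmetric] using L_def \<open>0 \<le> log 2 (real m + 1)\<close> \<open>1 \<le> L\<close>
      by (intro conjI) linarith+
  qed
  moreover have "0 \<le> C"
    using \<open>0 \<le> c'\<close> unfolding C_def by simp
  ultimately show ?thesis
    by blast
qed

lemma indep_KC_append_additive_both:
  assumes "universal U" and "indep U x y"
  shows "\<exists>C\<ge>0. \<forall>n m.
    \<bar>real (KC U (pre x n @ pre y m)) - (real (KC U (pre x n)) + real (KC U (pre y m)))\<bar>
      \<le> C * (1 + log 2 (real n + 1) + log 2 (real m + 1)) \<and>
    \<bar>real (KC U (pre y n @ pre x m)) - (real (KC U (pre y n)) + real (KC U (pre x m)))\<bar>
      \<le> C * (1 + log 2 (real n + 1) + log 2 (real m + 1))"
proof -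
  obtain C where "0 \<le> C" and C: "\<forall>n m.
      \<bar>real (KC U (pre x n @ pre y m)) - (real (KC U (pre x n)) + real (KC U (pre y m)))\<bar>
        \<le> C * (1 + log 2 (real n + 1) + log 2 (real m + 1))"
    using indep_KC_append_additive[OF assms] by blast
  obtain C' where "0 \<le> C'" and C': "\<forall>n m.
      \<bar>real (KC U (pre y n @ pre x m)) - (real (KC U (pre y n)) + real (KC U (pre x m)))\<bar>
        \<le> C' * (1 + log 2 (real n + 1) + log 2 (real m + 1))"
    using indep_KC_append_additive[OF assms(1) indep_commute[OF assms]] by blast
  show ?thesis
  proof (intro exI[of _ "C + C'"] conjI allI)
    show "0 \<le> C + C'"
      using \<open>0 \<le> C\<close> \<open>0 \<le> C'\<close> by simp
    fix n m
    have "0 \<le> 1 + log 2 (real n + 1) + log 2 (real m + 1)"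
      by simp
    then have "C * (1 + log 2 (real n + 1) + log 2 (real m + 1))
        \<le> (C + C') * (1 + log 2 (real n + 1) + log 2 (real m + 1))"
      and "C' * (1 + log 2 (real n + 1) + log 2 (real m + 1))
        \<le> (C + C') * (1 + log 2 (real n + 1) + log 2 (real m + 1))"
      using \<open>0 \<le> C\<close> \<open>0 \<le> C'\<close> by (simp_all add: mult_right_mono)
    then show "\<bar>real (KC U (pre x n @ pre y m)) - (real (KC U (pre x n)) + real (KC U (pre y m)))\<bar>
        \<le> (C + C') * (1 + log 2 (real n + 1) + log 2 (real m + 1))"
      and "\<bar>real (KC U (pre y n @ pre x m)) - (real (KC U (pre y n)) + real (KC U (pre x m)))\<bar>
        \<le> (C + C') * (1 + log 2 (real n + 1) + log 2 (real m + 1))"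
      using C[rule_format, of n m] C'[rule_format, of n m] by linarith+
  qed
qed

section \<open>Growth of the block lengths\<close>

lemma sum_recurrence:
  fixes t :: "nat \<Rightarrow> nat"
  assumes "t 1 = a" and "\<forall>i\<ge>2. t i = b * (\<Sum>j=1..i-1. t j)" and "1 \<le> i"
  shows "(\<Sum>j=1..i. t j) = a * (b + 1) ^ (i - 1)"
  using assms(3)
proof (induction i rule: dec_induct)
  case (step i)
  have "(\<Sum>j=1..Suc i. t j) = (\<Sum>j=1..i. t j) + t (Suc i)"
    by simp
  also have "t (Suc i) = b * (\<Sum>j=1..i. t j)"
    using assms(2) step(1) by auto
  finally have "(\<Sum>j=1..Suc i. t j) = a * ((b + 1) ^ (i - 1) * (b + 1))"
    unfolding step.IH by (simp add: algebra_simps)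
  also have "(b + 1) ^ (i - 1) * (b + 1) = (b + 1) ^ (Suc i - 1)"
    using step(1) by (cases i) (simp_all del: power_Suc add: power_Suc2)
  finally show ?case .
qed (use assms(1) in simp)

lemma log_recurrence_le:
  fixes t :: "nat \<Rightarrow> nat"
  assumes "t 1 = a" and "\<forall>i\<ge>2. t i = b * (\<Sum>j=1..i-1. t j)" and "1 \<le> i"
  shows "log 2 (real (t i) + 1) \<le> real i * log 2 ((real a + 1) * (real b + 1))"
proof -
  have "t i \<le> (\<Sum>j=1..i. t j)"
    using assms(3) by (intro member_le_sum) auto
  also have "\<dots> = a * (b + 1) ^ (i - 1)"
    using assms by (rule sum_recurrence)
  finally have "t i + 1 \<le> (a + 1) * (b + 1) ^ (i - 1)"
    using one_le_power[of "b + 1" "i - 1"] by (simp only: distrib_right mult_1) linarith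
  also have "\<dots> \<le> (a + 1) ^ i * (b + 1) ^ i"
    using assms(3) power_increasing[of 1 i "a + 1"] power_increasing[of "i - 1" i "b + 1"]
    by (intro mult_mono) auto
  finally have "real (t i + 1) \<le> real ((a + 1) ^ i * (b + 1) ^ i)"
    by (rule of_nat_mono)
  then have "real (t i) + 1 \<le> ((real a + 1) * (real b + 1)) ^ i"
    by (simp add: power_mult_distrib add.commute)
  then have "log 2 (real (t i) + 1) \<le> log 2 (((real a + 1) * (real b + 1)) ^ i)"
    by (intro log_mono) auto
  then show ?thesis
    by (simp add: log_nat_power)
qed

lemma recurrence_log_le_linear:
  fixes t :: "nat \<Rightarrow> nat"
  assumes "t 1 = a" and "\<forall>i\<ge>2. t i = b * (\<Sum>j=1..i-1. t j)"
  shows "\<exists>E. \<forall>i j. 1 \<le> i \<longrightarrow> 1 \<le> j \<longrightarrow>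
    1 + log 2 (real (t i) + 1) + log 2 (real (t j) + 1) \<le> E * real (i + j)"
proof -
  define E where "E = log 2 ((real a + 1) * (real b + 1))"
  have "0 \<le> E"
    unfolding E_def using mult_mono[of 1 "real a + 1" 1 "real b + 1"] by simp
  have "1 + log 2 (real (t i) + 1) + log 2 (real (t j) + 1) \<le> (1 + E) * real (i + j)"
    if "1 \<le> i" and "1 \<le> j" for i j
    using log_recurrence_le[OF assms that(1)] log_recurrence_le[OF assms that(2)] that \<open>0 \<le> E\<close>
    unfolding E_def[symmetric] by (simp add: algebra_simps)
  then show ?thesis
    by blast
qed

theorem lemma4p5:
  fixes U :: "bool list \<Rightarrow> bool list option"
    and x y :: "nat \<Rightarrow> bool"
    and \<tau> \<sigma> \<sigma>' :: real
    and a b :: nat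
    and t :: "nat \<Rightarrow> nat"
  assumes "universal U"
    and "indep U x y"
    and "\<tau> > 0" and "has_rate U x \<tau>" and "has_rate U y \<tau>"
    and "0 < \<sigma>" and "\<sigma> < \<tau>"
    and "0 < \<sigma>'" and "\<sigma>' < \<tau> - \<sigma>"
    and "int b = \<lceil>(1 - \<sigma>) / \<sigma>'\<rceil>"
    and "a > 0"
    and "t 0 = 0" and "t 1 = a"
    and "\<forall>i\<ge>2. t i = b * (\<Sum>j=1..i-1. t j)"
  shows "\<exists>c::real. \<forall>i j. i \<ge> 1 \<longrightarrow> j \<ge> 1 \<longrightarrow>
     \<bar>real (KC U (pre y (t i) @ pre x (t j))) - (real (KC U (pre y (t i))) + real (KC U (pre x (t j))))\<bar>
        \<le> c * real (i + j) \<and>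
     \<bar>real (KC U (pre x (t i) @ pre y (t j))) - (real (KC U (pre x (t i))) + real (KC U (pre y (t j))))\<bar>
        \<le> c * real (i + j)"
proof -
  obtain C where "0 \<le> C" and C: "\<forall>n m.
      \<bar>real (KC U (pre x n @ pre y m)) - (real (KC U (pre x n)) + real (KC U (pre y m)))\<bar>
        \<le> C * (1 + log 2 (real n + 1) + log 2 (real m + 1)) \<and>
      \<bar>real (KC U (pre y n @ pre x m)) - (real (KC U (pre y n)) + real (KC U (pre x m)))\<bar>
        \<le> C * (1 + log 2 (real n + 1) + log 2 (real m + 1))"
    using indep_KC_append_additive_both[OF assms(1,2)] by blast
  obtain E where E: "\<forall>i j. 1 \<le> i \<longrightarrow> 1 \<le> j \<longrightarrow>
      1 + log 2 (real (t i) + 1) + log 2 (real (t j) + 1) \<le> E * real (i + j)"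
    using recurrence_log_le_linear[OF assms(13,14)] by blast
  have "C * (1 + log 2 (real (t i) + 1) + log 2 (real (t j) + 1)) \<le> C * E * real (i + j)"
    if "1 \<le> i" and "1 \<le> j" for i j
    using mult_left_mono[OF E[rule_format, OF that] \<open>0 \<le> C\<close>] by (simp add: mult.assoc)
  then show ?thesis
    using C by (intro exI[of _ "C * E"] allI impI) (meson order_trans)
qed

end
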